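(* Let $s,t$ be real numbers with $t\ge s>0$, and define $K_0=1$, $K_1=t$, $K_2=t^2$, and $K_n = tK_{n-1}+s^2K_{n-2}$ for $n\ge 3$. Then $K_n \le M_n$ for every integer $n\ge 0$.
   Context: For a real number $s$, a positive integer $n$ and a set $P \subseteq \mathbb{R}$, $\mathcal{G}_s^{n\times n}(P)$ denotes the set of all $n\times n$ real upper Hessenberg matrices $A=(a_{ij})$ with $a_{i+1,i} = s$ for $1\le i\le n-1$, $a_{ij}=0$ for $i > j+1$, and $a_{ij}\in P$ for all $i \le j$. For $n\ge 1$, $M_n$ is the maximum of $|\det A|$ over $A\in\mathcal{G}_s^{n\times n}([0,t])$, and $M_0 := 1$. *)

theory Defs
  imports "Jordan_Normal_Form.Determinant"
begin

definition hess_set :: "real \<Rightarrow> nat \<Rightarrow> real set \<Rightarrow> real mat set" where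
  "hess_set s n P = {A. A \<in> carrier_mat n n \<and>
     (\<forall>i<n. \<forall>j<n. (i = j + 1 \<longrightarrow> A $$ (i, j) = s) \<and>
                  (i > j + 1 \<longrightarrow> A $$ (i, j) = 0) \<and>
                  (i \<le> j \<longrightarrow> A $$ (i, j) \<in> P))}"

(* M_n: maximum of |det A| over G_s^{n x n}([0,t]) (maximum exists by compactness,
   so it equals the supremum); M_0 = 1 *)
definition M :: "real \<Rightarrow> real \<Rightarrow> nat \<Rightarrow> real" where
  "M s t n = (if n = 0 then 1 else Sup ((\<lambda>A. \<bar>det A\<bar>) ` hess_set s n {0..t}))"

fun K :: "real \<Rightarrow> real \<Rightarrow> nat \<Rightarrow> real" where
  "K s t 0 = 1"
| "K s t (Suc 0) = t"
| "K s t (Suc (Suc 0)) = t^2"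
| "K s t (Suc (Suc (Suc n))) = t * K s t (Suc (Suc n)) + s^2 * K s t (Suc n)"

end

theory Submission
  imports Defs
begin

(* The witness is D_n = checker_hess s t n: subdiagonal s, entry t wherever j - i is even and
   nonnegative, and 0 elsewhere.  Expanding det D_n along the first column gives
   t det D_(n-1) - s det E_(n-1), where E_m = checker_hess_shifted s t m is D_m with its first
   row replaced by (0,t,0,t,...); expanding det E_m in the same way gives -s det D_(m-1).
   Hence det D_n obeys the recurrence of K_n, and since all matrices in the set have entries
   bounded by t, M_n is the supremum of a bounded set containing det D_n = K_n. *)

lemma det_expand_column_0_two_entries:
  fixes A :: "'a::comm_ring_1 mat"
  assumes A: "A \<in> carrier_mat (Suc (Suc m)) (Suc (Suc m))"
    and zero: "\<And>i. 2 \<le> i \<Longrightarrow> i < Suc (Suc m) \<Longrightarrow> A $$ (i, 0) = 0"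
  shows "det A = A $$ (0, 0) * det (mat_delete A 0 0) - A $$ (1, 0) * det (mat_delete A 1 0)"
proof -
  have "det A = (\<Sum>i<Suc (Suc m). A $$ (i, 0) * cofactor A i 0)"
    by (rule laplace_expansion_column[OF A]) simp
  also have "\<dots> = (\<Sum>i\<in>{0, 1}. A $$ (i, 0) * cofactor A i 0)"
    by (rule sum.mono_neutral_right) (auto simp: zero)
  finally show ?thesis
    by (simp add: cofactor_def)
qed

lemma abs_det_le_fact_mult_power:
  fixes A :: "'a::linordered_idom mat"
  assumes A: "A \<in> carrier_mat n n"
    and bound: "\<And>i j. i < n \<Longrightarrow> j < n \<Longrightarrow> \<bar>A $$ (i, j)\<bar> \<le> b"
  shows "\<bar>det A\<bar> \<le> fact n * b ^ n"
proof -
  let ?P = "{p. p permutes {0..<n}}"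
  have "\<bar>det A\<bar> \<le> (\<Sum>p\<in>?P. \<bar>signof p * (\<Prod>i = 0..<n. A $$ (i, p i))\<bar>)"
    using A by (simp add: det_def sum_abs)
  also have "\<dots> = (\<Sum>p\<in>?P. \<Prod>i = 0..<n. \<bar>A $$ (i, p i)\<bar>)"
  proof (rule sum.cong)
    fix p
    have "signof p \<in> {1, -1 :: 'a}"
      by (rule signof_pm_one)
    then have "\<bar>signof p :: 'a\<bar> = 1"
      by auto
    then show "\<bar>signof p * (\<Prod>i = 0..<n. A $$ (i, p i))\<bar> = (\<Prod>i = 0..<n. \<bar>A $$ (i, p i)\<bar>)"
      by (simp add: abs_mult abs_prod)
  qed simp
  also have "\<dots> \<le> (\<Sum>p\<in>?P. b ^ n)"
  proof (rule sum_mono)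
    fix p assume "p \<in> ?P"
    then have "\<And>i. i < n \<Longrightarrow> p i < n"
      using permutes_in_image by fastforce
    then have "(\<Prod>i = 0..<n. \<bar>A $$ (i, p i)\<bar>) \<le> (\<Prod>i = 0..<n. b)"
      by (intro prod_mono) (auto intro: bound)
    then show "(\<Prod>i = 0..<n. \<bar>A $$ (i, p i)\<bar>) \<le> b ^ n"
      by simp
  qed
  also have "\<dots> = fact n * b ^ n"
    by (simp add: card_permutations)
  finally show ?thesis .
qed

lemma hess_set_abs_entry_le:
  assumes "A \<in> hess_set s n P" and "\<bar>s\<bar> \<le> b" and "\<And>x. x \<in> P \<Longrightarrow> \<bar>x\<bar> \<le> b"
    and "i < n" and "j < n"
  shows "\<bar>A $$ (i, j)\<bar> \<le> b"
proof -
  consider "i \<le> j" | "i = j + 1" | "i > j + 1"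
    by linarith
  then show ?thesis
    using assms by cases (auto simp: hess_set_def)
qed

lemma bdd_above_abs_det_hess_set:
  assumes "\<bar>s\<bar> \<le> b" and "\<And>x. x \<in> P \<Longrightarrow> \<bar>x\<bar> \<le> b"
  shows "bdd_above ((\<lambda>A. \<bar>det A\<bar>) ` hess_set s n P)"
proof (rule bdd_aboveI2)
  fix A assume A: "A \<in> hess_set s n P"
  then have "A \<in> carrier_mat n n"
    by (simp add: hess_set_def)
  then show "\<bar>det A\<bar> \<le> fact n * b ^ n"
    using hess_set_abs_entry_le[OF A assms] by (rule abs_det_le_fact_mult_power)
qed

definition checker_entry :: "real \<Rightarrow> real \<Rightarrow> nat \<Rightarrow> nat \<Rightarrow> real" where
  "checker_entry s t i j = (if i = j + 1 then s else if i \<le> j \<and> even (j - i) then t else 0)"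

definition checker_hess :: "real \<Rightarrow> real \<Rightarrow> nat \<Rightarrow> real mat" where
  "checker_hess s t n = mat n n (\<lambda>(i, j). checker_entry s t i j)"

definition checker_hess_shifted :: "real \<Rightarrow> real \<Rightarrow> nat \<Rightarrow> real mat" where
  "checker_hess_shifted s t n =
     mat n n (\<lambda>(i, j). if i = 0 then checker_entry s t 0 (Suc j) else checker_entry s t i j)"

lemma checker_entry_Suc_Suc [simp]: "checker_entry s t (Suc i) (Suc j) = checker_entry s t i j"
  by (auto simp: checker_entry_def)

lemma checker_hess_in_hess_set:
  assumes "0 \<le> t"
  shows "checker_hess s t n \<in> hess_set s n {0..t}"
  using assms by (auto simp: hess_set_def checker_hess_def checker_entry_def)

lemma mat_delete_checker_hess_0_0: "mat_delete (checker_hess s t (Suc n)) 0 0 = checker_hess s t n"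
  by (rule eq_matI) (auto simp: mat_delete_def checker_hess_def)

lemma mat_delete_checker_hess_1_0:
  "mat_delete (checker_hess s t (Suc n)) 1 0 = checker_hess_shifted s t n"
  by (rule eq_matI) (auto simp: mat_delete_def checker_hess_def checker_hess_shifted_def checker_entry_def)

lemma mat_delete_checker_hess_shifted_1_0:
  "mat_delete (checker_hess_shifted s t (Suc n)) 1 0 = checker_hess s t n"
  by (rule eq_matI) (auto simp: mat_delete_def checker_hess_def checker_hess_shifted_def checker_entry_def)

lemma det_checker_hess_shifted_Suc_Suc:
  "det (checker_hess_shifted s t (Suc (Suc m))) = - s * det (checker_hess s t (Suc m))"
proof -
  let ?E = "checker_hess_shifted s t (Suc (Suc m))"
  have "det ?E = ?E $$ (0, 0) * det (mat_delete ?E 0 0) - ?E $$ (1, 0) * det (mat_delete ?E 1 0)"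
    by (rule det_expand_column_0_two_entries)
      (auto simp: checker_hess_shifted_def checker_entry_def)
  then show ?thesis
    by (simp only: mat_delete_checker_hess_shifted_1_0)
      (simp add: checker_hess_shifted_def checker_entry_def)
qed

lemma det_checker_hess_Suc_Suc:
  "det (checker_hess s t (Suc (Suc m))) =
     t * det (checker_hess s t (Suc m)) - s * det (checker_hess_shifted s t (Suc m))"
proof -
  let ?D = "checker_hess s t (Suc (Suc m))"
  have "det ?D = ?D $$ (0, 0) * det (mat_delete ?D 0 0) - ?D $$ (1, 0) * det (mat_delete ?D 1 0)"
    by (rule det_expand_column_0_two_entries) (auto simp: checker_hess_def checker_entry_def)
  then show ?thesis
    by (simp only: mat_delete_checker_hess_0_0 mat_delete_checker_hess_1_0)
      (simp add: checker_hess_def checker_entry_def)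
qed

lemma det_checker_hess_eq_K: "det (checker_hess s t n) = K s t n"
proof (induction s t n rule: K.induct)
  case (1 s t)
  show ?case
    by (simp add: det_def checker_hess_def)
next
  case (2 s t)
  show ?case
    by (simp add: det_single checker_hess_def checker_entry_def)
next
  case (3 s t)
  have "det (checker_hess_shifted s t 1) = 0"
    by (simp add: det_single checker_hess_shifted_def checker_entry_def)
  moreover have "det (checker_hess s t 1) = t"
    by (simp add: det_single checker_hess_def checker_entry_def)
  ultimately show ?case
    by (simp add: det_checker_hess_Suc_Suc numeral_2_eq_2 power2_eq_square)
next
  case (4 s t n)
  then show ?case
    by (simp add: det_checker_hess_Suc_Suc det_checker_hess_shifted_Suc_Suc power2_eq_square)
qed

lemma K_nonneg: "0 \<le> t \<Longrightarrow> 0 \<le> K s t n"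
  by (induction s t n rule: K.induct) auto

theorem lemma3p6:
  fixes s t :: real and n :: nat
  assumes "s > 0" and "t \<ge> s"
  shows "K s t n \<le> M s t n"
proof (cases "n = 0")
  case True
  then show ?thesis
    by (simp add: M_def)
next
  case False
  have "0 \<le> t"
    using assms by linarith
  then have "K s t n = \<bar>det (checker_hess s t n)\<bar>"
    by (simp add: det_checker_hess_eq_K K_nonneg)
  also have "\<dots> \<le> Sup ((\<lambda>A. \<bar>det A\<bar>) ` hess_set s n {0..t})"
  proof (rule cSup_upper)
    show "\<bar>det (checker_hess s t n)\<bar> \<in> (\<lambda>A. \<bar>det A\<bar>) ` hess_set s n {0..t}"
      using checker_hess_in_hess_set[OF \<open>0 \<le> t\<close>] by blast
    show "bdd_above ((\<lambda>A. \<bar>det A\<bar>) ` hess_set s n {0..t})"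
      using assms by (intro bdd_above_abs_det_hess_set[where b = t]) auto
  qed
  finally show ?thesis
    using False by (simp add: M_def)
qed

end
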